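(* Let $X$ be a mild $\mathcal M$-set and $f\in\mathcal M$. Then the map $X\to X$, $x\mapsto f.x$, is injective.
   Context: $\omega=\{1,2,3,\dots\}$, $\mathcal M$ the monoid of injections $\omega\to\omega$; an $\mathcal M$-set is a set with left $\mathcal M$-action. For $A\subset\omega$, $\mathcal M_A$ is the submonoid of injections fixing $A$ elementwise, and $x$ is supported on $A$ if $g.x=x$ for all $g\in\mathcal M_A$. An $\mathcal M$-set $X$ is mild if every $x\in X$ is supported on some co-infinite set $A\subset\omega$ (i.e.\ $\omega\setminus A$ infinite). *)

theory Defs
  imports Main
begin

definition omega :: "nat set" where "omega = {1..}"

(* The monoid M of injections omega -> omega, each represented canonically by a
   function nat => nat which is injective, maps omega into omega and fixes 0
   (so that every injection of omega has exactly one representative). *)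
definition Mon :: "(nat \<Rightarrow> nat) set" where
  "Mon = {f. inj f \<and> f ` omega \<subseteq> omega \<and> f 0 = 0}"

definition M_set :: "'x set \<Rightarrow> ((nat \<Rightarrow> nat) \<Rightarrow> 'x \<Rightarrow> 'x) \<Rightarrow> bool" where
  "M_set X act \<longleftrightarrow>
     (\<forall>f\<in>Mon. \<forall>x\<in>X. act f x \<in> X) \<and>
     (\<forall>x\<in>X. act id x = x) \<and>
     (\<forall>f\<in>Mon. \<forall>g\<in>Mon. \<forall>x\<in>X. act (f \<circ> g) x = act f (act g x))"

definition Mon_fix :: "nat set \<Rightarrow> (nat \<Rightarrow> nat) set" where
  "Mon_fix A = {g \<in> Mon. \<forall>a\<in>A. g a = a}"

definition supported_on :: "((nat \<Rightarrow> nat) \<Rightarrow> 'x \<Rightarrow> 'x) \<Rightarrow> 'x \<Rightarrow> nat set \<Rightarrow> bool" where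
  "supported_on act x A \<longleftrightarrow> (\<forall>g\<in>Mon_fix A. act g x = x)"

definition mild :: "'x set \<Rightarrow> ((nat \<Rightarrow> nat) \<Rightarrow> 'x \<Rightarrow> 'x) \<Rightarrow> bool" where
  "mild X act \<longleftrightarrow> M_set X act \<and>
     (\<forall>x\<in>X. \<exists>A. A \<subseteq> omega \<and> infinite (omega - A) \<and> supported_on act x A)"

end

(*
  An element x supported on a co-infinite set A is moved in the same way by any two
  injections that agree on A: extend \<sigma>|A to a bijection \<rho> of \<omega>, then \<sigma> = \<rho> \<circ> (\<rho>\<inverse> \<circ> \<sigma>)
  and \<rho>\<inverse> \<circ> \<sigma> fixes A, so \<sigma>.x = \<rho>.x.
  Hence if f.x = f.y with x, y supported on co-infinite A, B, then k.x = k.y for every k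
  with k(A \<union> B) co-infinite, because such a k agrees on A \<union> B with g \<circ> f for some g.
  Taking k to fix B and to squeeze \<omega> - B into a thin set gives y = k.x; then x and y have
  the common co-infinite support A \<union> k(A), and taking k = id there gives x = y.
*)

theory Submission
  imports Defs "HOL-Library.Infinite_Set" "HOL-Library.Countable_Set"
begin

lemma omega_iff: "n \<in> omega \<longleftrightarrow> n \<noteq> 0"
  by (auto simp: omega_def)

lemma Mon_iff: "f \<in> Mon \<longleftrightarrow> inj f \<and> f 0 = 0"
  unfolding Mon_def by (auto simp: omega_iff image_subset_iff) (metis injD neq0_conv)

lemma Mon_comp: "f \<in> Mon \<Longrightarrow> g \<in> Mon \<Longrightarrow> f \<circ> g \<in> Mon"
  by (simp add: Mon_iff inj_compose)

lemma Mon_fixI: "g \<in> Mon \<Longrightarrow> (\<And>a. a \<in> A \<Longrightarrow> g a = a) \<Longrightarrow> g \<in> Mon_fix A"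
  by (simp add: Mon_fix_def)

lemma M_set_act_comp:
  "M_set X act \<Longrightarrow> f \<in> Mon \<Longrightarrow> g \<in> Mon \<Longrightarrow> x \<in> X \<Longrightarrow> act (f \<circ> g) x = act f (act g x)"
  by (simp add: M_set_def)

lemma supported_onD: "supported_on act x A \<Longrightarrow> g \<in> Mon_fix A \<Longrightarrow> act g x = x"
  by (simp add: supported_on_def)

lemma supported_on_mono: "supported_on act x A \<Longrightarrow> A \<subseteq> B \<Longrightarrow> supported_on act x B"
  unfolding supported_on_def Mon_fix_def by auto

lemma inj_extend_into:
  fixes h :: "'a::countable \<Rightarrow> 'b"
  assumes "inj_on h S" "infinite U" "U \<inter> h ` S = {}"
  shows "\<exists>g. inj g \<and> (\<forall>s\<in>S. g s = h s) \<and> g ` (- S) \<subseteq> U"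
proof -
  obtain e :: "nat \<Rightarrow> 'b" where e: "inj e" "range e \<subseteq> U"
    using infinite_countable_subset assms(2) by blast
  define g where "g x = (if x \<in> S then h x else e (to_nat x))" for x
  have "inj g"
  proof (rule injI)
    fix x y
    assume "g x = g y"
    then show "x = y"
      using assms(3) e(2) inj_onD[OF assms(1)] unfolding g_def
      by (auto simp: inj_eq[OF e(1)] split: if_splits)
  qed
  moreover have "\<forall>s\<in>S. g s = h s" and "g ` (- S) \<subseteq> U"
    using e(2) by (auto simp: g_def)
  ultimately show ?thesis
    by blast
qed

lemma infinite_Diff_split:
  assumes "infinite C" "infinite D"
  shows "\<exists>T \<subseteq> D. infinite T \<and> infinite (D - T) \<and> infinite (C - T)"
proof -
  obtain T1 T2 where T: "T1 \<subseteq> D" "T2 \<subseteq> D" "infinite T1" "infinite T2" "T1 \<inter> T2 = {}"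
    using infinite_split[OF assms(2)] by metis
  then have "C = (C - T1) \<union> (C - T2)"
    by blast
  then have "infinite (C - T1) \<or> infinite (C - T2)"
    using assms(1) by (metis finite_UnI)
  moreover have "T2 \<subseteq> D - T1" "T1 \<subseteq> D - T2"
    using T by auto
  ultimately show ?thesis
    using T by (meson infinite_super)
qed

lemma Mon_fix_extend_into:
  assumes "T \<subseteq> omega - B" "infinite T"
  shows "\<exists>k \<in> Mon_fix B. k ` (omega - B) \<subseteq> T"
proof -
  have "T \<inter> id ` insert 0 B = {}"
    using assms(1) by (auto simp: omega_iff)
  then obtain k where "inj k" "\<forall>s\<in>insert 0 B. k s = s" "k ` (- insert 0 B) \<subseteq> T"
    using inj_extend_into[of id "insert 0 B" T] assms(2) by auto
  moreover have "omega - B = - insert 0 B"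
    by (auto simp: omega_iff)
  ultimately show ?thesis
    by (auto simp: Mon_fix_def Mon_iff)
qed

lemma Mon_left_factor:
  assumes "f \<in> Mon" "k \<in> Mon" "infinite (omega - k ` S)"
  shows "\<exists>g \<in> Mon. \<forall>s\<in>S. g (f s) = k s"
proof -
  have f: "inj f" "f 0 = 0" and k: "inj k" "k 0 = 0"
    using assms(1,2) by (auto simp: Mon_iff)
  define S0 where "S0 = insert 0 S"
  have "inj_on (k \<circ> inv f) (f ` S0)"
    by (auto intro!: inj_onI simp: inv_f_f[OF f(1)] inj_eq[OF k(1)])
  moreover have "(omega - k ` S) \<inter> (k \<circ> inv f) ` f ` S0 = {}"
    using k(2) by (auto simp: S0_def inv_f_f[OF f(1)] omega_iff)
  ultimately obtain g where g: "inj g" "\<forall>s\<in>f ` S0. g s = (k \<circ> inv f) s"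
    using inj_extend_into[of "k \<circ> inv f" "f ` S0" "omega - k ` S"] assms(3) by blast
  have "\<forall>s\<in>S0. g (f s) = k s"
    using g(2) by (simp add: inv_f_f[OF f(1)])
  then show ?thesis
    using g(1) f(2) k(2) by (auto simp: S0_def Mon_iff)
qed

lemma Mon_extend_bij:
  assumes "\<sigma> \<in> Mon" "infinite (omega - A)"
  shows "\<exists>\<rho>. bij \<rho> \<and> \<rho> 0 = 0 \<and> (\<forall>a\<in>A. \<rho> a = \<sigma> a)"
proof -
  have \<sigma>: "inj \<sigma>" "\<sigma> 0 = 0"
    using assms(1) by (auto simp: Mon_iff)
  define A0 where "A0 = insert 0 A"
  have "- A0 = omega - A"
    by (auto simp: A0_def omega_iff)
  then have inf_dom: "infinite (- A0)"
    using assms(2) by simp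
  then have "infinite (\<sigma> ` (- A0))"
    using finite_imageD inj_on_subset[OF \<sigma>(1) subset_UNIV] by blast
  moreover have "\<sigma> ` (- A0) \<subseteq> - \<sigma> ` A0"
    using \<sigma>(1) by (auto simp: inj_eq)
  ultimately have inf_cod: "infinite (- \<sigma> ` A0)"
    using infinite_super by blast
  obtain p where p: "bij_betw p (- A0) (- \<sigma> ` A0)"
    using bij_betw_trans[OF to_nat_on_infinite[OF countableI_type inf_dom]
        bij_betw_from_nat_into[OF countableI_type inf_cod]] by blast
  define \<rho> where "\<rho> x = (if x \<in> A0 then \<sigma> x else p x)" for x
  have "bij_betw \<rho> A0 (\<sigma> ` A0)"
    using inj_on_imp_bij_betw[OF inj_on_subset[OF \<sigma>(1) subset_UNIV]]
    by (rule bij_betw_cong[THEN iffD1, rotated]) (simp add: \<rho>_def)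
  moreover have "bij_betw \<rho> (- A0) (- \<sigma> ` A0)"
    using p by (rule bij_betw_cong[THEN iffD1, rotated]) (simp add: \<rho>_def)
  ultimately have "bij_betw \<rho> (A0 \<union> - A0) (\<sigma> ` A0 \<union> - \<sigma> ` A0)"
    by (rule bij_betw_combine) blast
  then have "bij \<rho>"
    by simp
  moreover have "\<forall>a\<in>A0. \<rho> a = \<sigma> a"
    by (simp add: \<rho>_def)
  ultimately show ?thesis
    using \<sigma>(2) by (auto simp: A0_def)
qed

lemma Mon_fix_co_infinite_images:
  assumes "infinite (omega - A)" "infinite (omega - B)"
  shows "\<exists>k \<in> Mon_fix B. infinite (omega - k ` (A \<union> B)) \<and> infinite (omega - (A \<union> k ` A))"
proof -
  obtain T where T: "T \<subseteq> omega - B" "infinite T" "infinite (omega - B - T)" "infinite (omega - A - T)"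
    using infinite_Diff_split[OF assms(1,2)] by blast
  obtain k where k: "k \<in> Mon_fix B" "k ` (omega - B) \<subseteq> T"
    using Mon_fix_extend_into[OF T(1,2)] by blast
  have k_cases: "(a \<in> B \<and> k a = a) \<or> k a = 0 \<or> k a \<in> T" for a
  proof -
    have "k 0 = 0" "\<forall>b\<in>B. k b = b"
      using k(1) by (auto simp: Mon_fix_def Mon_iff)
    then show ?thesis
      using k(2) by (cases "a = 0") (auto simp: omega_iff image_subset_iff)
  qed
  have "k a \<notin> omega - B - T" and "a \<in> A \<Longrightarrow> k a \<notin> omega - A - T" for a
    using k_cases[of a] by (auto simp: omega_iff)
  then have "omega - B - T \<subseteq> omega - k ` (A \<union> B)" and "omega - A - T \<subseteq> omega - (A \<union> k ` A)"
    by blast+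
  then show ?thesis
    using k(1) T(3,4) by (meson infinite_super)
qed

lemma act_eq_bij_extension:
  assumes "M_set X act" "x \<in> X" "supported_on act x A" "\<sigma> \<in> Mon"
    and "bij \<rho>" "\<rho> 0 = 0" "\<forall>a\<in>A. \<rho> a = \<sigma> a"
  shows "act \<sigma> x = act \<rho> x"
proof -
  define k where "k = inv \<rho> \<circ> \<sigma>"
  have \<rho>_inj: "inj \<rho>"
    using assms(5) by (rule bij_is_inj)
  have "\<rho> \<circ> k = \<sigma>"
    using assms(5) by (auto simp: k_def bij_is_surj surj_f_inv_f)
  moreover have "\<rho> \<in> Mon"
    using \<rho>_inj assms(6) by (simp add: Mon_iff)
  moreover have "k \<in> Mon_fix A"
  proof (rule Mon_fixI)
    have "inj (inv \<rho>)"
      using assms(5) by (simp add: bij_imp_bij_inv bij_is_inj)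
    moreover have "inv \<rho> 0 = 0"
      using inv_f_f[OF \<rho>_inj, of 0] assms(6) by simp
    ultimately show "k \<in> Mon"
      using assms(4) by (simp add: k_def Mon_iff inj_compose)
    show "k a = a" if "a \<in> A" for a
      using that assms(7) inv_f_f[OF \<rho>_inj] by (metis comp_apply k_def)
  qed
  ultimately show ?thesis
    using M_set_act_comp[OF assms(1)] Mon_fix_def assms(2,3) supported_onD by fastforce
qed

lemma act_eq_if_agree_on_support:
  assumes "M_set X act" "x \<in> X" "supported_on act x A" "infinite (omega - A)"
    and "\<sigma> \<in> Mon" "\<tau> \<in> Mon" "\<forall>a\<in>A. \<sigma> a = \<tau> a"
  shows "act \<sigma> x = act \<tau> x"
proof -
  obtain \<rho> where "bij \<rho>" "\<rho> 0 = 0" "\<forall>a\<in>A. \<rho> a = \<sigma> a"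
    using Mon_extend_bij[OF assms(5,4)] by blast
  then show ?thesis
    using act_eq_bij_extension[OF assms(1-3)] assms(5-7) by metis
qed

lemma supported_on_act_image:
  assumes "M_set X act" "x \<in> X" "supported_on act x A" "infinite (omega - A)" "\<sigma> \<in> Mon"
  shows "supported_on act (act \<sigma> x) (\<sigma> ` A)"
  unfolding supported_on_def
proof
  fix g
  assume g: "g \<in> Mon_fix (\<sigma> ` A)"
  then have "g \<in> Mon"
    by (simp add: Mon_fix_def)
  with g have "act (g \<circ> \<sigma>) x = act \<sigma> x"
    using act_eq_if_agree_on_support[OF assms(1-4) Mon_comp assms(5)] assms(5)
    by (simp add: Mon_fix_def)
  then show "act g (act \<sigma> x) = act \<sigma> x"
    using M_set_act_comp[OF assms(1) \<open>g \<in> Mon\<close> assms(5,2)] by simp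
qed

lemma act_eq_transfer:
  assumes "M_set X act" "f \<in> Mon" "act f x = act f y"
    and "x \<in> X" "supported_on act x A" "infinite (omega - A)"
    and "y \<in> X" "supported_on act y B" "infinite (omega - B)"
    and "k \<in> Mon" "infinite (omega - k ` (A \<union> B))"
  shows "act k x = act k y"
proof -
  obtain g where g: "g \<in> Mon" "\<forall>s\<in>A \<union> B. g (f s) = k s"
    using Mon_left_factor[OF assms(2,10,11)] by blast
  have gf: "g \<circ> f \<in> Mon"
    using g(1) assms(2) by (rule Mon_comp)
  have "act k x = act (g \<circ> f) x"
    using act_eq_if_agree_on_support[OF assms(1,4-6,10) gf] g(2) by simp
  also have "\<dots> = act (g \<circ> f) y"
    using M_set_act_comp[OF assms(1) g(1) assms(2)] assms(3,4,7) by simp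
  also have "\<dots> = act k y"
    using act_eq_if_agree_on_support[OF assms(1,7-9) gf assms(10)] g(2) by simp
  finally show ?thesis .
qed

theorem lemma1p12:
  fixes X :: "'x set" and act :: "(nat \<Rightarrow> nat) \<Rightarrow> 'x \<Rightarrow> 'x" and f :: "nat \<Rightarrow> nat"
  assumes "mild X act"
    and "f \<in> Mon"
  shows "inj_on (act f) X"
proof (rule inj_onI)
  fix x y
  assume x: "x \<in> X" and y: "y \<in> X" and fxy: "act f x = act f y"
  have X: "M_set X act"
    using assms(1) by (simp add: mild_def)
  obtain A where A: "supported_on act x A" "infinite (omega - A)"
    using assms(1) x by (auto simp: mild_def)
  obtain B where B: "supported_on act y B" "infinite (omega - B)"
    using assms(1) y by (auto simp: mild_def)
  obtain k where k: "k \<in> Mon_fix B" "infinite (omega - k ` (A \<union> B))"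
    and S: "infinite (omega - (A \<union> k ` A))"
    using Mon_fix_co_infinite_images[OF A(2) B(2)] by blast
  have "k \<in> Mon"
    using k(1) by (simp add: Mon_fix_def)
  have "y = act k y"
    using supported_onD[OF B(1) k(1)] by simp
  also have "\<dots> = act k x"
    using act_eq_transfer[OF X assms(2) fxy x A y B \<open>k \<in> Mon\<close>] k(2) by simp
  finally have "y = act k x" .
  then have "supported_on act y (k ` A)"
    using supported_on_act_image[OF X x A \<open>k \<in> Mon\<close>] by simp
  then have y_S: "supported_on act y (A \<union> k ` A)"
    by (rule supported_on_mono) blast
  have x_S: "supported_on act x (A \<union> k ` A)"
    using A(1) by (rule supported_on_mono) blast
  have "id \<in> Mon"
    by (simp add: Mon_iff)
  then have "act id x = act id y"
    using act_eq_transfer[OF X assms(2) fxy x x_S S y y_S S] S by simp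
  then show "x = y"
    using X x y by (simp add: M_set_def)
qed

end
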